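(* Assume Hypothesis (H). Let $T\in\mathcal M$, let $\mathfrak k$ be a Lie subalgebra with $\mathfrak h\subsetneq\mathfrak k$, and let $\tau>0$. Then the set $\mathcal C(\mathfrak k,\tau)=\{g\in\mathcal M_T(\mathfrak k):\lambda_+(g)\le\tau\}$ is compact in $\mathcal M_T(\mathfrak k)$.
   Context: Let $G$ be a compact connected Lie group with Lie algebra $\mathfrak g$ and $H<G$ a closed connected subgroup with Lie algebra $\mathfrak h$; $M=G/H$, $\dim M\ge3$. Fix an $\mathrm{Ad}(G)$-invariant inner product $Q$ on $\mathfrak g$; $\mathfrak v\ominus\mathfrak u$ is the $Q$-orthogonal complement; $\mathfrak m=\mathfrak g\ominus\mathfrak h$. $\mathcal M$ is the set of $\mathrm{Ad}(H)$-invariant inner products on $\mathfrak m$. $\mathcal M(\mathfrak k)$ is the set of $\mathrm{Ad}(H)$-invariant inner products on $\mathfrak k\ominus\mathfrak h$, with the topology inherited from the space of bilinear forms on $\mathfrak k\ominus\mathfrak h$; $\mathcal M_T(\mathfrak k)=\{g\in\mathcal M(\mathfrak k):\mathrm{tr}_gT|_{\mathfrak k\ominus\mathfrak h}=1\}$ with the subspace topology, where $\mathrm{tr}_g$ denotes trace with respect to $g$. For $g\in\mathcal M(\mathfrak k)$, $\lambda_+(g)$ is the supremum of $g(X,X)$ over $X\in\mathfrak k\ominus\mathfrak h$ with $Q(X,X)=1$. Hypothesis (H): every Lie subalgebra $\mathfrak s\subset\mathfrak g$ with $\mathfrak h\subsetneq\mathfrak s$ satisfies (1) for all nonzero $\mathrm{Ad}(H)$-invariant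 subspaces $\mathfrak u\subset\mathfrak s\ominus\mathfrak h$ and $\mathfrak v\subset\mathfrak g\ominus\mathfrak s$, the representations $\mathrm{Ad}(H)|_{\mathfrak u}$ and $\mathrm{Ad}(H)|_{\mathfrak v}$ are inequivalent; (2) $[\mathfrak r,\mathfrak s]\neq\{0\}$ for every $\mathrm{Ad}(H)$-invariant one-dimensional subspace $\mathfrak r\subset\mathfrak g\ominus\mathfrak s$. *)

theory Defs
  imports "HOL-Analysis.Analysis"
begin

text \<open>The Lie algebra g is modelled by a euclidean_space type 'a, whose inner product
plays the role of the Ad(G)-invariant inner product Q; the bracket is br.\<close>

definition compact_lie_bracket :: "('a::euclidean_space \<Rightarrow> 'a \<Rightarrow> 'a) \<Rightarrow> bool" where
  "compact_lie_bracket br \<longleftrightarrow>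
     bilinear br \<and>
     (\<forall>x y. br x y = - br y x) \<and>
     (\<forall>x y z. br x (br y z) + br y (br z x) + br z (br x y) = 0) \<and>
     (\<forall>x y z. br x y \<bullet> z = - (y \<bullet> br x z))"

definition lie_subalgebra :: "('a::euclidean_space \<Rightarrow> 'a \<Rightarrow> 'a) \<Rightarrow> 'a set \<Rightarrow> bool" where
  "lie_subalgebra br s \<longleftrightarrow> subspace s \<and> (\<forall>x\<in>s. \<forall>y\<in>s. br x y \<in> s)"

definition ocompl :: "'a::euclidean_space set \<Rightarrow> 'a set \<Rightarrow> 'a set" where
  "ocompl v u = {x \<in> v. \<forall>y\<in>u. x \<bullet> y = 0}"

text \<open>Ad(H)-invariance of a subspace (H connected: equivalent to ad(h)-invariance).\<close>
definition h_invariant_subspace ::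
  "('a::euclidean_space \<Rightarrow> 'a \<Rightarrow> 'a) \<Rightarrow> 'a set \<Rightarrow> 'a set \<Rightarrow> bool" where
  "h_invariant_subspace br h u \<longleftrightarrow> subspace u \<and> (\<forall>X\<in>h. \<forall>v\<in>u. br X v \<in> u)"

text \<open>Equivalence of the representations Ad(H)|u and Ad(H)|v
  (H connected: an H-equivariant isomorphism is the same as an h-equivariant one).\<close>
definition h_reps_equivalent ::
  "('a::euclidean_space \<Rightarrow> 'a \<Rightarrow> 'a) \<Rightarrow> 'a set \<Rightarrow> 'a set \<Rightarrow> 'a set \<Rightarrow> bool" where
  "h_reps_equivalent br h u v \<longleftrightarrow>
     (\<exists>\<phi>. linear \<phi> \<and> bij_betw \<phi> u v \<and> (\<forall>X\<in>h. \<forall>w\<in>u. \<phi> (br X w) = br X (\<phi> w)))"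

definition hypothesis_H :: "('a::euclidean_space \<Rightarrow> 'a \<Rightarrow> 'a) \<Rightarrow> 'a set \<Rightarrow> bool" where
  "hypothesis_H br h \<longleftrightarrow>
    (\<forall>s. lie_subalgebra br s \<and> h \<subset> s \<longrightarrow>
       (\<forall>u v. h_invariant_subspace br h u \<and> u \<subseteq> ocompl s h \<and> u \<noteq> {0} \<and>
              h_invariant_subspace br h v \<and> v \<subseteq> ocompl UNIV s \<and> v \<noteq> {0}
              \<longrightarrow> \<not> h_reps_equivalent br h u v) \<and>
       (\<forall>r. h_invariant_subspace br h r \<and> dim r = 1 \<and> r \<subseteq> ocompl UNIV s \<longrightarrow>
              (\<exists>x\<in>r. \<exists>y\<in>s. br x y \<noteq> 0)))"

text \<open>Ad(H)-invariant inner products on a subspace W, represented as bilinear forms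
  on W extended by zero outside W.\<close>
definition inv_inner_products ::
  "('a::euclidean_space \<Rightarrow> 'a \<Rightarrow> 'a) \<Rightarrow> 'a set \<Rightarrow> 'a set \<Rightarrow> ('a \<Rightarrow> 'a \<Rightarrow> real) set" where
  "inv_inner_products br h W =
    {b. (\<forall>x y. x \<notin> W \<or> y \<notin> W \<longrightarrow> b x y = 0) \<and>
        (\<forall>x\<in>W. \<forall>y\<in>W. \<forall>z\<in>W. b (x + y) z = b x z + b y z) \<and>
        (\<forall>x\<in>W. \<forall>z\<in>W. \<forall>c. b (c *\<^sub>R x) z = c * b x z) \<and>
        (\<forall>x\<in>W. \<forall>y\<in>W. b x y = b y x) \<and>
        (\<forall>x\<in>W. x \<noteq> 0 \<longrightarrow> b x x > 0) \<and>
        (\<forall>X\<in>h. \<forall>x\<in>W. \<forall>y\<in>W. b (br X x) y + b x (br X y) = 0)}"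

text \<open>Trace of T restricted to W with respect to the inner product g on W:
  sum of T(e,e) over a g-orthonormal basis of W (independent of the basis).\<close>
definition trace_wrt :: "'a::euclidean_space set \<Rightarrow> ('a \<Rightarrow> 'a \<Rightarrow> real) \<Rightarrow> ('a \<Rightarrow> 'a \<Rightarrow> real) \<Rightarrow> real" where
  "trace_wrt W g T = (SOME t. \<exists>B. finite B \<and> B \<subseteq> W \<and> span B = W \<and>
       (\<forall>x\<in>B. \<forall>y\<in>B. g x y = (if x = y then 1 else 0)) \<and> t = (\<Sum>e\<in>B. T e e))"

definition lambda_plus :: "'a::euclidean_space set \<Rightarrow> ('a \<Rightarrow> 'a \<Rightarrow> real) \<Rightarrow> real" where
  "lambda_plus W g = Sup {g X X | X. X \<in> W \<and> X \<bullet> X = 1}"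

end

theory Submission
  imports Defs
begin

text \<open>Write W for k \<ominus> h. Every inner product g on W is the pull-back g(x, y) = A x \<bullet> A y of Q
  along a linear map A that vanishes on the orthogonal complement of W and maps into W. The
  normalisation tr_g T = 1 forces T \<le> g on W, and \<lambda>+(g) \<le> \<tau> says norm A \<le> sqrt \<tau>; so
  the factors A of the metrics in C(k, \<tau>) form a bounded set of linear maps. It is also
  closed: along a convergent sequence of factors, the lower bound T \<le> A*A and the coercivity
  of T make the inverses of A on W converge, and tr_g T is the sum of T over the A-preimages
  of a Q-orthonormal basis. Hence the factors form a compact set, and C(k, \<tau>) is its image
  under the continuous map A \<mapsto> A*A.\<close>

section \<open>Inner products and orthonormal bases on a subspace\<close>

definition symmetric_bilinear_on :: "'a::euclidean_space set \<Rightarrow> ('a \<Rightarrow> 'a \<Rightarrow> real) \<Rightarrow> bool" where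
  "symmetric_bilinear_on W b \<longleftrightarrow>
     (\<forall>x\<in>W. \<forall>y\<in>W. \<forall>z\<in>W. b (x + y) z = b x z + b y z) \<and>
     (\<forall>x\<in>W. \<forall>z\<in>W. \<forall>c. b (c *\<^sub>R x) z = c * b x z) \<and>
     (\<forall>x\<in>W. \<forall>y\<in>W. b x y = b y x)"

definition inner_product_on :: "'a::euclidean_space set \<Rightarrow> ('a \<Rightarrow> 'a \<Rightarrow> real) \<Rightarrow> bool" where
  "inner_product_on W b \<longleftrightarrow> symmetric_bilinear_on W b \<and> (\<forall>x\<in>W. x \<noteq> 0 \<longrightarrow> b x x > 0)"

definition orthonormal_on :: "'a::euclidean_space set \<Rightarrow> ('a \<Rightarrow> 'a \<Rightarrow> real) \<Rightarrow> 'a set \<Rightarrow> bool" where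
  "orthonormal_on W b S \<longleftrightarrow>
     finite S \<and> S \<subseteq> W \<and> (\<forall>x\<in>S. \<forall>y\<in>S. b x y = (if x = y then 1 else 0))"

definition orthonormal_basis_on :: "'a::euclidean_space set \<Rightarrow> ('a \<Rightarrow> 'a \<Rightarrow> real) \<Rightarrow> 'a set \<Rightarrow> bool" where
  "orthonormal_basis_on W b S \<longleftrightarrow> orthonormal_on W b S \<and> span S = W"

lemma inner_product_onD: "inner_product_on W b \<Longrightarrow> symmetric_bilinear_on W b"
  unfolding inner_product_on_def by simp

lemma inner_product_on_pos: "inner_product_on W b \<Longrightarrow> x \<in> W \<Longrightarrow> x \<noteq> 0 \<Longrightarrow> b x x > 0"
  unfolding inner_product_on_def by simp

lemma inner_product_on_subset: "inner_product_on V b \<Longrightarrow> W \<subseteq> V \<Longrightarrow> inner_product_on W b"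
  unfolding inner_product_on_def symmetric_bilinear_on_def by (meson subsetD)

lemma symmetric_bilinear_on_inner: "symmetric_bilinear_on W (\<bullet>)"
  unfolding symmetric_bilinear_on_def
  by (auto simp: inner_add_left inner_add_right inner_commute)

lemma orthonormal_basis_onD:
  assumes "orthonormal_basis_on W b S"
  shows "finite S" "S \<subseteq> W" "span S = W" "\<And>x y. x \<in> S \<Longrightarrow> y \<in> S \<Longrightarrow> b x y = (if x = y then 1 else 0)"
  using assms unfolding orthonormal_basis_on_def orthonormal_on_def by auto

lemma orthonormal_on_sum_collapse:
  assumes "orthonormal_on W b S" "e' \<in> S"
  shows "(\<Sum>e\<in>S. c e * b e e') = c e'"
proof -
  have "(\<Sum>e\<in>S. c e * b e e') = (\<Sum>e\<in>S. if e = e' then c e else 0)"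
    using assms unfolding orthonormal_on_def by (intro sum.cong) auto
  then show ?thesis using assms unfolding orthonormal_on_def by simp
qed

context
  fixes W :: "'a::euclidean_space set" and b :: "'a \<Rightarrow> 'a \<Rightarrow> real"
  assumes W: "subspace W" and b: "symmetric_bilinear_on W b"
begin

lemma symmetric_bilinear_on_commute: "x \<in> W \<Longrightarrow> y \<in> W \<Longrightarrow> b x y = b y x"
  using b unfolding symmetric_bilinear_on_def by blast

lemma symmetric_bilinear_on_add_left:
  "x \<in> W \<Longrightarrow> y \<in> W \<Longrightarrow> z \<in> W \<Longrightarrow> b (x + y) z = b x z + b y z"
  using b unfolding symmetric_bilinear_on_def by blast

lemma symmetric_bilinear_on_scale_left: "x \<in> W \<Longrightarrow> z \<in> W \<Longrightarrow> b (c *\<^sub>R x) z = c * b x z"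
  using b unfolding symmetric_bilinear_on_def by blast

lemma symmetric_bilinear_on_zero_left: "z \<in> W \<Longrightarrow> b 0 z = 0"
  using symmetric_bilinear_on_scale_left[of z z 0] by simp

lemma symmetric_bilinear_on_scale_scale: "x \<in> W \<Longrightarrow> b (c *\<^sub>R x) (c *\<^sub>R x) = c\<^sup>2 * b x x"
  using symmetric_bilinear_on_scale_left symmetric_bilinear_on_commute subspace_scale[OF W]
  by (simp add: power2_eq_square)

lemma symmetric_bilinear_on_sum_left:
  assumes "finite I" "\<And>i. i \<in> I \<Longrightarrow> v i \<in> W" "z \<in> W"
  shows "b (\<Sum>i\<in>I. c i *\<^sub>R v i) z = (\<Sum>i\<in>I. c i * b (v i) z)"
  using assms
proof (induction I rule: finite_induct)
  case empty
  then show ?case using symmetric_bilinear_on_zero_left by simp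
next
  case (insert i I)
  have "(\<Sum>i\<in>I. c i *\<^sub>R v i) \<in> W"
    using insert by (intro subspace_sum[OF W] subspace_scale[OF W]) auto
  with insert show ?case
    by (simp add: symmetric_bilinear_on_add_left symmetric_bilinear_on_scale_left subspace_scale[OF W])
qed

lemma symmetric_bilinear_on_sum_sum:
  assumes "finite I" "\<And>i. i \<in> I \<Longrightarrow> v i \<in> W"
  shows "b (\<Sum>i\<in>I. c i *\<^sub>R v i) (\<Sum>j\<in>I. d j *\<^sub>R v j) = (\<Sum>i\<in>I. \<Sum>j\<in>I. c i * d j * b (v i) (v j))"
proof -
  have sum_in: "(\<Sum>i\<in>I. c i *\<^sub>R v i) \<in> W" for c
    using assms by (intro subspace_sum[OF W] subspace_scale[OF W]) auto
  have "b (\<Sum>i\<in>I. c i *\<^sub>R v i) (\<Sum>j\<in>I. d j *\<^sub>R v j) = (\<Sum>i\<in>I. c i * b (v i) (\<Sum>j\<in>I. d j *\<^sub>R v j))"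
    using assms sum_in by (rule symmetric_bilinear_on_sum_left)
  also have "\<dots> = (\<Sum>i\<in>I. c i * (\<Sum>j\<in>I. d j * b (v i) (v j)))"
  proof (intro sum.cong refl arg_cong2[where f = "(*)"])
    fix i assume i: "i \<in> I"
    have "b (v i) (\<Sum>j\<in>I. d j *\<^sub>R v j) = b (\<Sum>j\<in>I. d j *\<^sub>R v j) (v i)"
      using assms(2)[OF i] sum_in by (rule symmetric_bilinear_on_commute)
    also have "\<dots> = (\<Sum>j\<in>I. d j * b (v j) (v i))"
      using assms i by (intro symmetric_bilinear_on_sum_left) auto
    also have "\<dots> = (\<Sum>j\<in>I. d j * b (v i) (v j))"
      using assms i by (intro sum.cong refl) (simp add: symmetric_bilinear_on_commute)
    finally show "b (v i) (\<Sum>j\<in>I. d j *\<^sub>R v j) = (\<Sum>j\<in>I. d j * b (v i) (v j))" .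
  qed
  finally show ?thesis by (simp add: sum_distrib_left mult.assoc)
qed

lemma orthonormal_on_expansion:
  assumes S: "orthonormal_on W b S" and x: "x \<in> span S"
  shows "x = (\<Sum>e\<in>S. b x e *\<^sub>R e)"
proof -
  have fin: "finite S" and SW: "S \<subseteq> W" using S unfolding orthonormal_on_def by auto
  obtain c where x_eq: "x = (\<Sum>e\<in>S. c e *\<^sub>R e)" using x span_finite[OF fin] by auto
  have "b x e' = c e'" if "e' \<in> S" for e'
  proof -
    have "b x e' = (\<Sum>e\<in>S. c e * b e e')"
      unfolding x_eq using SW that by (intro symmetric_bilinear_on_sum_left[OF fin]) auto
    then show ?thesis using orthonormal_on_sum_collapse[OF S that] by simp
  qed
  then show ?thesis unfolding x_eq by (intro sum.cong) auto
qed

lemma orthonormal_on_independent: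
  assumes S: "orthonormal_on W b S"
  shows "independent S"
proof -
  have fin: "finite S" and SW: "S \<subseteq> W" using S unfolding orthonormal_on_def by auto
  show ?thesis
  proof (rule independent_if_scalars_zero[OF fin])
    fix f x assume sum0: "(\<Sum>x\<in>S. f x *\<^sub>R x) = 0" and x: "x \<in> S"
    have "b (\<Sum>e\<in>S. f e *\<^sub>R e) x = (\<Sum>e\<in>S. f e * b e x)"
      using SW x by (intro symmetric_bilinear_on_sum_left[OF fin]) auto
    then show "f x = 0"
      using sum0 symmetric_bilinear_on_zero_left x SW orthonormal_on_sum_collapse[OF S x] by auto
  qed
qed

lemma orthonormal_basis_on_card: "orthonormal_basis_on W b B \<Longrightarrow> card B = dim W"
  using orthonormal_on_independent dim_span_eq_card_independent
  unfolding orthonormal_basis_on_def by metis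

lemma orthonormal_basis_on_expansion:
  "orthonormal_basis_on W b B \<Longrightarrow> x \<in> W \<Longrightarrow> x = (\<Sum>e\<in>B. b x e *\<^sub>R e)"
  using orthonormal_on_expansion unfolding orthonormal_basis_on_def by auto

lemma orthonormal_basis_on_parseval:
  assumes B: "orthonormal_basis_on W b B" and x: "x \<in> W" and y: "y \<in> W"
  shows "b x y = (\<Sum>e\<in>B. b x e * b y e)"
proof -
  have fin: "finite B" and BW: "B \<subseteq> W" using orthonormal_basis_onD[OF B] by auto
  have "b x y = b (\<Sum>e\<in>B. b x e *\<^sub>R e) y"
    using orthonormal_basis_on_expansion[OF B x] by simp
  also have "\<dots> = (\<Sum>e\<in>B. b x e * b e y)"
    using BW y by (intro symmetric_bilinear_on_sum_left[OF fin]) auto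
  also have "\<dots> = (\<Sum>e\<in>B. b x e * b y e)"
    using BW y by (intro sum.cong) (auto simp: symmetric_bilinear_on_commute)
  finally show ?thesis .
qed

end

text \<open>Expand the first basis in the second; the double sum collapses by Parseval's identity.\<close>

lemma orthonormal_basis_on_trace_eq:
  assumes W: "subspace W" and b: "symmetric_bilinear_on W b" and T: "symmetric_bilinear_on W T"
    and B: "orthonormal_basis_on W b B" and B': "orthonormal_basis_on W b B'"
  shows "(\<Sum>e\<in>B. T e e) = (\<Sum>e\<in>B'. T e e)"
proof -
  note B'D = orthonormal_basis_onD[OF B'] and BD = orthonormal_basis_onD[OF B]
  have "(\<Sum>e\<in>B. T e e) = (\<Sum>e\<in>B. \<Sum>f\<in>B'. \<Sum>f'\<in>B'. b e f * b e f' * T f f')"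
  proof (intro sum.cong refl)
    fix e assume e: "e \<in> B"
    have "e = (\<Sum>f\<in>B'. b e f *\<^sub>R f)"
      using orthonormal_basis_on_expansion[OF W b B'] e BD(2) by auto
    then show "T e e = (\<Sum>f\<in>B'. \<Sum>f'\<in>B'. b e f * b e f' * T f f')"
      using symmetric_bilinear_on_sum_sum[OF W T B'D(1), of id "b e" "b e"] B'D(2) by auto
  qed
  also have "\<dots> = (\<Sum>f\<in>B'. \<Sum>f'\<in>B'. (\<Sum>e\<in>B. b e f * b e f') * T f f')"
    by (simp add: sum_distrib_right sum.swap[of _ B])
  also have "\<dots> = (\<Sum>f\<in>B'. \<Sum>f'\<in>B'. b f f' * T f f')"
  proof (intro sum.cong refl)
    fix f f' assume "f \<in> B'" "f' \<in> B'"
    then have "b f f' = (\<Sum>e\<in>B. b f e * b f' e)"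
      using orthonormal_basis_on_parseval[OF W b B] B'D(2) by auto
    also have "\<dots> = (\<Sum>e\<in>B. b e f * b e f')"
      using \<open>f \<in> B'\<close> \<open>f' \<in> B'\<close> B'D(2) BD(2)
      by (intro sum.cong refl) (metis subsetD symmetric_bilinear_on_commute[OF W b])
    finally have "b f f' = (\<Sum>e\<in>B. b e f * b e f')" .
    then show "(\<Sum>e\<in>B. b e f * b e f') * T f f' = b f f' * T f f'" by simp
  qed
  also have "\<dots> = (\<Sum>f\<in>B'. \<Sum>f'\<in>B'. if f' = f then T f f else 0)"
    using B'D(4) by (intro sum.cong refl) auto
  also have "\<dots> = (\<Sum>f\<in>B'. T f f)"
    using B'D(1) by simp
  finally show ?thesis .
qed

lemma orthonormal_on_insert_exists:
  assumes W: "subspace W" and b: "inner_product_on W b" and S: "orthonormal_on W b S"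
    and x: "x \<in> W" "x \<notin> span S"
  obtains z where "z \<notin> S" "orthonormal_on W b (insert z S)"
proof -
  note bil = inner_product_onD[OF b]
  have fin: "finite S" and SW: "S \<subseteq> W" using S unfolding orthonormal_on_def by auto
  define p where "p = (\<Sum>e\<in>S. b x e *\<^sub>R e)"
  define y where "y = x + (-1) *\<^sub>R p"
  have p: "p \<in> W" "p \<in> span S"
    unfolding p_def using SW
    by (auto intro!: subspace_sum[OF W] subspace_scale[OF W]) (intro span_sum span_scale span_base)
  have y: "y \<in> W" unfolding y_def using x p by (intro subspace_add[OF W] subspace_scale[OF W])
  have "y \<noteq> 0" unfolding y_def using x p by (auto simp: span_diff)
  then have y_pos: "b y y > 0" using inner_product_on_pos[OF b y] by blast
  have y_orth: "b y e' = 0" if e': "e' \<in> S" for e'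
  proof -
    have e'W: "e' \<in> W" using e' SW by auto
    have "b p e' = (\<Sum>e\<in>S. b x e * b e e')"
      unfolding p_def using SW e'W by (intro symmetric_bilinear_on_sum_left[OF W bil fin]) auto
    then have p_e': "b p e' = b x e'" using orthonormal_on_sum_collapse[OF S e'] by simp
    have "b y e' = b x e' + b ((-1) *\<^sub>R p) e'"
      unfolding y_def using x p e'W by (intro symmetric_bilinear_on_add_left[OF W bil] subspace_scale[OF W])
    also have "b ((-1) *\<^sub>R p) e' = - b p e'"
      using symmetric_bilinear_on_scale_left[OF W bil p(1) e'W, of "-1"] by simp
    finally show ?thesis using p_e' by simp
  qed
  define z where "z = (1 / sqrt (b y y)) *\<^sub>R y"
  have z: "z \<in> W" unfolding z_def using y subspace_scale[OF W] by blast
  have zz: "b z z = 1"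
    unfolding z_def using symmetric_bilinear_on_scale_scale[OF W bil y] y_pos by (simp add: power_divide)
  have ze: "b z e = 0" "b e z = 0" if "e \<in> S" for e
  proof -
    show "b z e = 0"
      unfolding z_def using symmetric_bilinear_on_scale_left[OF W bil y] y_orth that SW by auto
    then show "b e z = 0" using symmetric_bilinear_on_commute[OF W bil z] that SW by auto
  qed
  show ?thesis
  proof
    show "z \<notin> S" using ze zz by force
    show "orthonormal_on W b (insert z S)" using S z zz ze unfolding orthonormal_on_def by auto
  qed
qed

lemma orthonormal_on_extends_to_basis:
  assumes W: "subspace W" and b: "inner_product_on W b" and S: "orthonormal_on W b S"
  shows "\<exists>S'. S \<subseteq> S' \<and> orthonormal_basis_on W b S'"
  using S
proof (induction "dim W - card S" arbitrary: S rule: less_induct)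
  case less
  have fin: "finite S" and SW: "S \<subseteq> W" using less.prems unfolding orthonormal_on_def by auto
  show ?case
  proof (cases "W \<subseteq> span S")
    case True
    then have "span S = W" using SW span_minimal[OF SW W] by auto
    then show ?thesis using less.prems unfolding orthonormal_basis_on_def by blast
  next
    case False
    then obtain x where "x \<in> W" "x \<notin> span S" by auto
    then obtain z where "z \<notin> S" and S': "orthonormal_on W b (insert z S)"
      using orthonormal_on_insert_exists[OF W b less.prems] by blast
    have "card (insert z S) \<le> dim W"
      using independent_card_le_dim[of "insert z S" W] orthonormal_on_independent[OF W _ S'] S' b
      unfolding orthonormal_on_def inner_product_on_def by auto
    then have "dim W - card (insert z S) < dim W - card S" using \<open>z \<notin> S\<close> fin by auto
    from less.hyps[OF this S'] show ?thesis by blast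
  qed
qed

lemma orthonormal_basis_on_exists:
  "subspace W \<Longrightarrow> inner_product_on W b \<Longrightarrow> \<exists>B. orthonormal_basis_on W b B"
  using orthonormal_on_extends_to_basis[of W b "{}"] unfolding orthonormal_on_def by auto

lemma trace_wrt_eq_sum:
  assumes W: "subspace W" and b: "symmetric_bilinear_on W b" and T: "symmetric_bilinear_on W T"
    and B: "orthonormal_basis_on W b B"
  shows "trace_wrt W b T = (\<Sum>e\<in>B. T e e)"
proof -
  let ?P = "\<lambda>t. \<exists>B. finite B \<and> B \<subseteq> W \<and> span B = W \<and>
       (\<forall>x\<in>B. \<forall>y\<in>B. b x y = (if x = y then 1 else 0)) \<and> t = (\<Sum>e\<in>B. T e e)"
  have "?P (\<Sum>e\<in>B. T e e)"
    using B unfolding orthonormal_basis_on_def orthonormal_on_def by blast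
  then have "?P (trace_wrt W b T)" unfolding trace_wrt_def by (rule someI)
  then obtain B' where "orthonormal_basis_on W b B'" "trace_wrt W b T = (\<Sum>e\<in>B'. T e e)"
    unfolding orthonormal_basis_on_def orthonormal_on_def by blast
  then show ?thesis using orthonormal_basis_on_trace_eq[OF W b T B] by simp
qed

text \<open>The normalised vector x / sqrt (g x x) extends to a g-orthonormal basis, and the other
  diagonal terms of T in that basis are nonnegative.\<close>

lemma trace_wrt_eq_1_imp_le:
  assumes W: "subspace W" and g: "inner_product_on W g" and T: "inner_product_on W T"
    and tr: "trace_wrt W g T = 1" and x: "x \<in> W"
  shows "T x x \<le> g x x"
proof (cases "x = 0")
  case True
  then show ?thesis
    using symmetric_bilinear_on_zero_left[OF W inner_product_onD[OF g] x]
      symmetric_bilinear_on_zero_left[OF W inner_product_onD[OF T] x] by simp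
next
  case False
  note gb = inner_product_onD[OF g] and Tb = inner_product_onD[OF T]
  have pos: "g x x > 0" using inner_product_on_pos[OF g x False] .
  define e where "e = (1 / sqrt (g x x)) *\<^sub>R x"
  have "e \<in> W" unfolding e_def using x subspace_scale[OF W] by blast
  moreover have "g e e = 1"
    unfolding e_def using symmetric_bilinear_on_scale_scale[OF W gb x] pos by (simp add: power_divide)
  ultimately have "orthonormal_on W g {e}" unfolding orthonormal_on_def by auto
  then obtain B where "e \<in> B" and B: "orthonormal_basis_on W g B"
    using orthonormal_on_extends_to_basis[OF W g] by blast
  note BD = orthonormal_basis_onD[OF B]
  have "T e e \<le> (\<Sum>f\<in>B. T f f)"
  proof (rule member_le_sum[OF \<open>e \<in> B\<close> _ BD(1)])
    fix f assume f: "f \<in> B - {e}"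
    then have "f \<noteq> 0" using BD(2,4) symmetric_bilinear_on_zero_left[OF W gb] by force
    then show "0 \<le> T f f" using inner_product_on_pos[OF T] f BD(2) by (auto intro: less_imp_le)
  qed
  also have "\<dots> = 1" using trace_wrt_eq_sum[OF W gb Tb B] tr by simp
  finally have "T e e \<le> 1" .
  moreover have "T e e = T x x / g x x"
    unfolding e_def using symmetric_bilinear_on_scale_scale[OF W Tb x] pos by (simp add: power_divide)
  ultimately show ?thesis using pos by (simp add: divide_le_eq)
qed

lemma orthonormal_basis_on_inner_exists:
  assumes "subspace W" shows "\<exists>B. orthonormal_basis_on W (\<bullet>) B"
proof -
  obtain B where B: "B \<subseteq> W" "pairwise orthogonal B" "\<And>x. x \<in> B \<Longrightarrow> norm x = 1"
    "independent B" "span B = W"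
    using orthonormal_basis_subspace[OF assms] by metis
  have "finite B" using B(4) independent_imp_finite by auto
  moreover have "\<forall>x\<in>B. \<forall>y\<in>B. x \<bullet> y = (if x = y then 1 else 0)"
    using B(2,3) unfolding pairwise_def orthogonal_def by (auto simp: norm_eq_1)
  ultimately show ?thesis using B unfolding orthonormal_basis_on_def orthonormal_on_def by blast
qed

lemma symmetric_bilinear_on_coordinates:
  assumes W: "subspace W" and T: "symmetric_bilinear_on W T"
    and B: "orthonormal_basis_on W (\<bullet>) B" and x: "x \<in> W" and y: "y \<in> W"
  shows "T x y = (\<Sum>e\<in>B. \<Sum>e'\<in>B. (x \<bullet> e) * (y \<bullet> e') * T e e')"
proof -
  note BD = orthonormal_basis_onD[OF B]
  have "z = (\<Sum>e\<in>B. (z \<bullet> e) *\<^sub>R e)" if "z \<in> W" for z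
    using orthonormal_basis_on_expansion[OF W symmetric_bilinear_on_inner B that] .
  then have "T x y = T (\<Sum>e\<in>B. (x \<bullet> e) *\<^sub>R e) (\<Sum>e\<in>B. (y \<bullet> e) *\<^sub>R e)"
    using x y by metis
  also have "\<dots> = (\<Sum>e\<in>B. \<Sum>e'\<in>B. (x \<bullet> e) * (y \<bullet> e') * T e e')"
    using symmetric_bilinear_on_sum_sum[OF W T BD(1), of id] BD(2) by auto
  finally show ?thesis .
qed

lemma symmetric_bilinear_on_expand_left:
  assumes W: "subspace W" and T: "symmetric_bilinear_on W T"
    and B: "orthonormal_basis_on W (\<bullet>) B" and x: "x \<in> W" and z: "z \<in> W"
  shows "T x z = (\<Sum>e\<in>B. (x \<bullet> e) * T e z)"
proof -
  have "T x z = T (\<Sum>e\<in>B. (x \<bullet> e) *\<^sub>R e) z"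
    using orthonormal_basis_on_expansion[OF W symmetric_bilinear_on_inner B x] by metis
  also have "\<dots> = (\<Sum>e\<in>B. (x \<bullet> e) * T e z)"
    using symmetric_bilinear_on_sum_left[OF W T orthonormal_basis_onD(1)[OF B], of id]
      orthonormal_basis_onD(2)[OF B] z by auto
  finally show ?thesis .
qed

lemma inner_product_on_coercive:
  assumes W: "subspace W" and T: "inner_product_on W T"
  obtains m where "m > 0" "\<And>y. y \<in> W \<Longrightarrow> m * norm y ^ 2 \<le> T y y"
proof -
  note Tb = inner_product_onD[OF T]
  obtain B where B: "orthonormal_basis_on W (\<bullet>) B" using orthonormal_basis_on_inner_exists[OF W] ..
  define q where "q y = (\<Sum>e\<in>B. \<Sum>e'\<in>B. (y \<bullet> e) * (y \<bullet> e') * T e e')" for y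
  have Tq: "T y y = q y" if "y \<in> W" for y
    unfolding q_def using symmetric_bilinear_on_coordinates[OF W Tb B that that] .
  let ?S = "W \<inter> sphere 0 1"
  have "compact ?S" using closed_subspace[OF W] by (intro closed_Int_compact) auto
  moreover have "continuous_on ?S q" unfolding q_def by (intro continuous_intros)
  ultimately obtain m where m: "m > 0" "\<And>y. y \<in> ?S \<Longrightarrow> m \<le> q y"
  proof (cases "?S = {}")
    case True
    then show ?thesis using that[of 1] by simp
  next
    case False
    obtain y0 where "y0 \<in> ?S" and "\<And>y. y \<in> ?S \<Longrightarrow> q y0 \<le> q y"
      using continuous_attains_inf[OF \<open>compact ?S\<close> False \<open>continuous_on ?S q\<close>] by blast
    moreover have "q y0 > 0" using \<open>y0 \<in> ?S\<close> inner_product_on_pos[OF T] Tq by force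
    ultimately show ?thesis using that by blast
  qed
  show ?thesis
  proof (rule that[OF m(1)])
    fix y assume y: "y \<in> W"
    show "m * norm y ^ 2 \<le> T y y"
    proof (cases "y = 0")
      case True
      then show ?thesis using symmetric_bilinear_on_zero_left[OF W Tb y] by simp
    next
      case False
      have y': "(1 / norm y) *\<^sub>R y \<in> ?S" using y False subspace_scale[OF W] by auto
      have "m \<le> T ((1 / norm y) *\<^sub>R y) ((1 / norm y) *\<^sub>R y)"
        using m(2)[OF y'] Tq y' by auto
      then have "m \<le> (1 / norm y)\<^sup>2 * T y y"
        using symmetric_bilinear_on_scale_scale[OF W Tb y] by simp
      then show ?thesis using False by (simp add: power_divide field_simps)
    qed
  qed
qed

lemma subspace_ocompl: "subspace k \<Longrightarrow> subspace (ocompl k h)"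
  unfolding subspace_def ocompl_def by (auto simp: inner_add_left)

lemma ocompl_nontrivial:
  assumes k: "subspace k" and h: "subspace h" and "h \<subset> k"
  shows "ocompl k h \<noteq> {0}"
proof -
  obtain x where x: "x \<in> k" "x \<notin> h" using \<open>h \<subset> k\<close> by auto
  obtain y z where y: "y \<in> span h" and z: "\<And>w. w \<in> span h \<Longrightarrow> orthogonal z w" and "x = y + z"
    using orthogonal_subspace_decomp_exists by blast
  moreover have "span h = h" using h by (simp add: span_eq_iff)
  ultimately have "z = x - y" "y \<in> h" by auto
  then have "z \<in> k" "z \<noteq> 0" using x \<open>h \<subset> k\<close> subspace_diff[OF k] by auto
  moreover have "\<forall>w\<in>h. z \<bullet> w = 0" using z span_base unfolding orthogonal_def by blast
  ultimately have "z \<in> ocompl k h" "z \<noteq> 0" unfolding ocompl_def by auto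
  then show ?thesis by blast
qed

lemma linear_inj_on_image_subspace_eq:
  fixes f :: "'a::euclidean_space \<Rightarrow> 'a"
  assumes W: "subspace W" and f: "linear f" and "f ` W \<subseteq> W" and "inj_on f W"
  shows "f ` W = W"
proof -
  have "span W = W" using W by (simp add: span_eq_iff)
  then have "dim (f ` W) = dim W"
    using dim_image_eq[OF f] \<open>inj_on f W\<close> by metis
  then show ?thesis
    using subspace_dim_equal[OF linear_subspace_image[OF f W] W \<open>f ` W \<subseteq> W\<close>] by simp
qed


lemma inv_inner_products_inner_product_on:
  "g \<in> inv_inner_products br h W \<Longrightarrow> inner_product_on W g"
  unfolding inv_inner_products_def inner_product_on_def symmetric_bilinear_on_def by blast

lemma inner_sum_orthonormal:
  assumes "orthonormal_on W (\<bullet>) B"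
  shows "(\<Sum>e\<in>B. c e *\<^sub>R e) \<bullet> (\<Sum>e\<in>B. d e *\<^sub>R e) = (\<Sum>e\<in>B. c e * d e)"
proof -
  have fin: "finite B" and on: "\<And>x y. x \<in> B \<Longrightarrow> y \<in> B \<Longrightarrow> x \<bullet> y = (if x = y then 1 else 0)"
    using assms unfolding orthonormal_on_def by auto
  have "(\<Sum>e\<in>B. c e *\<^sub>R e) \<bullet> (\<Sum>e\<in>B. d e *\<^sub>R e) = (\<Sum>e\<in>B. \<Sum>e'\<in>B. d e * c e' * (e' \<bullet> e))"
    by (simp add: inner_sum_left inner_sum_right sum_distrib_left mult.assoc)
  also have "\<dots> = (\<Sum>e\<in>B. \<Sum>e'\<in>B. if e' = e then c e * d e else 0)"
    using on by (intro sum.cong refl) auto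
  finally show ?thesis using fin by simp
qed

lemma symmetric_bilinear_on_tendsto:
  assumes W: "subspace W" and T: "symmetric_bilinear_on W T"
    and x: "\<And>n. x n \<in> W" and lim: "x \<longlonglongrightarrow> y" and y: "y \<in> W"
  shows "(\<lambda>n. T (x n) (x n)) \<longlonglongrightarrow> T y y"
proof -
  obtain B where B: "orthonormal_basis_on W (\<bullet>) B" using orthonormal_basis_on_inner_exists[OF W] ..
  have "(\<lambda>n. \<Sum>e\<in>B. \<Sum>e'\<in>B. (x n \<bullet> e) * (x n \<bullet> e') * T e e')
          \<longlonglongrightarrow> (\<Sum>e\<in>B. \<Sum>e'\<in>B. (y \<bullet> e) * (y \<bullet> e') * T e e')"
    using lim by (intro tendsto_intros)
  then show ?thesis using symmetric_bilinear_on_coordinates[OF W T B] x y by simp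
qed

section \<open>Factoring the metrics through linear maps\<close>

locale bounded_metrics =
  fixes br :: "'a::euclidean_space \<Rightarrow> 'a \<Rightarrow> 'a" and h W :: "'a set"
    and T :: "'a \<Rightarrow> 'a \<Rightarrow> real" and \<tau> :: real and B :: "'a set"
  assumes W: "subspace W" and W_nontrivial: "W \<noteq> {0}"
    and T: "inner_product_on W T" and tau: "\<tau> > 0"
    and B: "orthonormal_basis_on W (\<bullet>) B"
begin

text \<open>With W = k \<ominus> h, metrics is the set C(k, \<tau>) of the statement.\<close>

definition metrics :: "('a \<Rightarrow> 'a \<Rightarrow> real) set" where
  "metrics = {g \<in> inv_inner_products br h W. trace_wrt W g T = 1 \<and> lambda_plus W g \<le> \<tau>}"

definition gram :: "('a \<Rightarrow>\<^sub>L 'a) \<Rightarrow> 'a \<Rightarrow> 'a \<Rightarrow> real" where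
  "gram A x y = (if x \<in> W \<and> y \<in> W then A x \<bullet> A y else 0)"

definition factors :: "('a \<Rightarrow>\<^sub>L 'a) set" where
  "factors = {A. range (blinfun_apply A) \<subseteq> W \<and>
     (\<forall>x. (\<forall>w\<in>W. x \<bullet> w = 0) \<longrightarrow> blinfun_apply A x = 0) \<and> gram A \<in> metrics}"

definition dominates_T :: "('a \<Rightarrow>\<^sub>L 'a) \<Rightarrow> bool" where
  "dominates_T A \<longleftrightarrow> range (blinfun_apply A) \<subseteq> W \<and> (\<forall>y\<in>W. T y y \<le> A y \<bullet> A y)"

lemma gram_eq: "x \<in> W \<Longrightarrow> y \<in> W \<Longrightarrow> gram A x y = A x \<bullet> A y"
  unfolding gram_def by simp

lemma symmetric_bilinear_on_gram: "symmetric_bilinear_on W (gram A)"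
  unfolding symmetric_bilinear_on_def gram_def
  by (auto simp: blinfun.add_right blinfun.scaleR_right inner_add_left subspace_add[OF W]
      subspace_scale[OF W] intro: inner_commute)

lemma continuous_on_gram: "continuous_on UNIV gram"
proof (intro continuous_on_coordinatewise_then_product)
  fix x y
  show "continuous_on UNIV (\<lambda>A. gram A x y)"
    unfolding gram_def by (cases "x \<in> W \<and> y \<in> W") (auto intro!: continuous_intros)
qed

lemma bdd_above_gram_unit: "bdd_above {gram A X X | X. X \<in> W \<and> X \<bullet> X = 1}"
proof (rule bdd_aboveI)
  fix s assume "s \<in> {gram A X X | X. X \<in> W \<and> X \<bullet> X = 1}"
  then obtain X where X: "X \<in> W" "norm X = 1" "s = A X \<bullet> A X"
    by (auto simp: gram_eq norm_eq_1)
  have "s = (norm (A X))\<^sup>2" using X by (simp add: power2_norm_eq_inner)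
  also have "\<dots> \<le> (norm A * norm X)\<^sup>2" by (intro power_mono norm_blinfun) auto
  finally show "s \<le> (norm A)\<^sup>2" using X by simp
qed

lemma lambda_plus_gram_le_iff:
  fixes A :: "'a \<Rightarrow>\<^sub>L 'a"
  shows "lambda_plus W (gram A) \<le> c \<longleftrightarrow> (\<forall>y\<in>W. A y \<bullet> A y \<le> c * (norm y)\<^sup>2)"
proof -
  let ?S = "{gram A X X | X. X \<in> W \<and> X \<bullet> X = 1}"
  have normalize: "gram A ((1 / norm y) *\<^sub>R y) ((1 / norm y) *\<^sub>R y) = A y \<bullet> A y / (norm y)\<^sup>2"
    and unit: "(1 / norm y) *\<^sub>R y \<in> W" "((1 / norm y) *\<^sub>R y) \<bullet> ((1 / norm y) *\<^sub>R y) = 1"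
    if "y \<in> W" "y \<noteq> 0" for y
    using that subspace_scale[OF W]
    by (auto simp: gram_eq blinfun.scaleR_right power2_norm_eq_inner[symmetric] power_divide
        power2_eq_square)
  have "?S \<noteq> {}"
  proof -
    obtain y where "y \<in> W" "y \<noteq> 0" using W_nontrivial subspace_0[OF W] by blast
    then show ?thesis using unit by blast
  qed
  moreover have "bdd_above ?S" by (rule bdd_above_gram_unit)
  ultimately have "Sup ?S \<le> c \<longleftrightarrow> (\<forall>s\<in>?S. s \<le> c)" by (rule cSup_le_iff)
  also have "\<dots> \<longleftrightarrow> (\<forall>y\<in>W. A y \<bullet> A y \<le> c * (norm y)\<^sup>2)"
  proof safe
    fix y assume S: "\<forall>s\<in>?S. s \<le> c" and y: "y \<in> W"
    show "A y \<bullet> A y \<le> c * (norm y)\<^sup>2"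
    proof (cases "y = 0")
      case False
      then have "A y \<bullet> A y / (norm y)\<^sup>2 \<le> c" using S y normalize unit by fastforce
      then show ?thesis using False by (simp add: divide_le_eq mult.commute)
    qed simp
  next
    fix X assume "\<forall>y\<in>W. A y \<bullet> A y \<le> c * (norm y)\<^sup>2" "X \<in> W" "X \<bullet> X = 1"
    moreover from \<open>X \<bullet> X = 1\<close> have "norm X = 1" by (simp add: norm_eq_1)
    ultimately show "gram A X X \<le> c" by (auto simp: gram_eq)
  qed
  finally show ?thesis unfolding lambda_plus_def .
qed

lemma factors_dominates_T: "A \<in> factors \<Longrightarrow> dominates_T A"
  unfolding factors_def metrics_def dominates_T_def
  using trace_wrt_eq_1_imp_le[OF W inv_inner_products_inner_product_on T] gram_eq by fastforce

lemma factors_norm_le: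
  assumes A: "A \<in> factors" shows "norm A \<le> sqrt \<tau>"
proof (rule norm_blinfun_bound)
  show "0 \<le> sqrt \<tau>" using tau by simp
next
  fix x
  obtain y z where y: "y \<in> span W" and z: "\<And>w. w \<in> span W \<Longrightarrow> orthogonal z w" and "x = y + z"
    using orthogonal_subspace_decomp_exists by blast
  have "span W = W" using W by (simp add: span_eq_iff)
  with y have "y \<in> W" by simp
  have "A z = 0" using A z span_base unfolding factors_def orthogonal_def by blast
  then have "A x = A y" using \<open>x = y + z\<close> by (simp add: blinfun.add_right)
  have "lambda_plus W (gram A) \<le> \<tau>" using A unfolding factors_def metrics_def by blast
  then have "A y \<bullet> A y \<le> \<tau> * (norm y)\<^sup>2" using \<open>y \<in> W\<close> by (simp add: lambda_plus_gram_le_iff)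
  then have "(norm (A y))\<^sup>2 \<le> \<tau> * (norm y)\<^sup>2" by (simp only: power2_norm_eq_inner)
  also have "\<dots> \<le> \<tau> * (norm x)\<^sup>2"
  proof -
    have "orthogonal y z" using z[OF y] by (simp add: orthogonal_commute)
    then have "(norm x)\<^sup>2 = (norm y)\<^sup>2 + (norm z)\<^sup>2"
      using \<open>x = y + z\<close> norm_add_Pythagorean by simp
    then show ?thesis using tau by simp
  qed
  also have "\<dots> = (sqrt \<tau> * norm x)\<^sup>2" using tau by (simp add: power_mult_distrib)
  finally have "(norm (A x))\<^sup>2 \<le> (sqrt \<tau> * norm x)\<^sup>2" using \<open>A x = A y\<close> by simp
  then show "norm (A x) \<le> sqrt \<tau> * norm x" by (rule power2_le_imp_le) (simp add: tau less_imp_le)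
qed

lemma dominates_T_inj_on:
  assumes "dominates_T A" shows "inj_on A W"
proof (rule inj_onI)
  fix x y assume x: "x \<in> W" and y: "y \<in> W" and "A x = A y"
  then have "A (x - y) = 0" by (simp add: blinfun.diff_right)
  then have "T (x - y) (x - y) \<le> 0"
    using assms subspace_diff[OF W x y] unfolding dominates_T_def by fastforce
  then show "x = y" using inner_product_on_pos[OF T subspace_diff[OF W x y]] by fastforce
qed

lemma dominates_T_image_eq:
  assumes "dominates_T A" shows "A ` W = W"
proof (rule linear_inj_on_image_subspace_eq[OF W _ _ dominates_T_inj_on[OF assms]])
  show "linear (blinfun_apply A)" by (simp add: blinfun.bounded_linear_right bounded_linear.linear)
  show "A ` W \<subseteq> W" using assms unfolding dominates_T_def by auto
qed

lemma dominates_T_inv_into: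
  assumes "dominates_T A" and "b \<in> W"
  shows "inv_into W A b \<in> W" "A (inv_into W A b) = b"
  using assms dominates_T_image_eq[OF assms(1)] by (auto intro: inv_into_into f_inv_into_f)

text \<open>The A-preimage of B is a (gram A)-orthonormal basis.\<close>

lemma trace_wrt_gram:
  assumes A: "dominates_T A"
  shows "trace_wrt W (gram A) T = (\<Sum>b\<in>B. T (inv_into W A b) (inv_into W A b))"
proof -
  let ?u = "inv_into W (blinfun_apply A)"
  note BD = orthonormal_basis_onD[OF B]
  have u: "?u b \<in> W" "A (?u b) = b" if "b \<in> B" for b
    using dominates_T_inv_into[OF A] that BD(2) by auto
  have inj: "inj_on ?u B" using inj_on_inv_into[of B A W] BD(2) dominates_T_image_eq[OF A] by simp
  have O: "orthonormal_on W (gram A) (?u ` B)"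
    unfolding orthonormal_on_def
  proof (intro conjI ballI)
    show "finite (?u ` B)" "?u ` B \<subseteq> W" using BD(1) u by auto
  next
    fix x y assume "x \<in> ?u ` B" "y \<in> ?u ` B"
    then obtain b b' where b: "b \<in> B" "x = ?u b" and b': "b' \<in> B" "y = ?u b'" by auto
    have "gram A x y = b \<bullet> b'" using b b' u by (simp add: gram_eq)
    also have "\<dots> = (if b = b' then 1 else 0)" using BD(4) b b' by auto
    also have "(b = b') = (x = y)" using b b' inj unfolding inj_on_def by auto
    finally show "gram A x y = (if x = y then 1 else 0)" .
  qed
  have "card (?u ` B) = dim W"
    using card_image[OF inj] orthonormal_basis_on_card[OF W symmetric_bilinear_on_inner B]
    by simp
  then have "W \<subseteq> span (?u ` B)"
    using card_eq_dim[of "?u ` B" W] orthonormal_on_independent[OF W symmetric_bilinear_on_gram O] u BD(1)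
    by auto
  then have "orthonormal_basis_on W (gram A) (?u ` B)"
    using O span_minimal[of "?u ` B" W] W u unfolding orthonormal_basis_on_def by auto
  then show ?thesis
    using trace_wrt_eq_sum[OF W symmetric_bilinear_on_gram inner_product_onD[OF T]] sum.reindex[OF inj]
    by simp
qed

lemma bounded_factors: "bounded factors"
  unfolding bounded_iff using factors_norm_le by blast

text \<open>A square root of g in the basis B: the coefficients of F x are the g-products of x with
  a g-orthonormal basis matched to B.\<close>

lemma gram_factor_exists:
  assumes g: "inner_product_on W g" and g_outside: "\<forall>x y. x \<notin> W \<or> y \<notin> W \<longrightarrow> g x y = 0"
  obtains A where "range (blinfun_apply A) \<subseteq> W" "\<forall>x. (\<forall>w\<in>W. x \<bullet> w = 0) \<longrightarrow> A x = 0"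
    "gram A = g"
proof -
  note gb = inner_product_onD[OF g] and BD = orthonormal_basis_onD[OF B]
  obtain B0 where B0: "orthonormal_basis_on W g B0" using orthonormal_basis_on_exists[OF W g] ..
  have "card B = card B0"
    using orthonormal_basis_on_card[OF W gb B0]
      orthonormal_basis_on_card[OF W symmetric_bilinear_on_inner B] by simp
  then obtain \<psi> where \<psi>: "bij_betw \<psi> B B0"
    using finite_same_card_bij BD(1) orthonormal_basis_onD(1)[OF B0] by blast
  have \<psi>W: "\<psi> b \<in> W" if "b \<in> B" for b
    using \<psi> that orthonormal_basis_onD(2)[OF B0] unfolding bij_betw_def by auto
  define F where "F x = (\<Sum>b'\<in>B. (\<Sum>b\<in>B. (x \<bullet> b) * g b (\<psi> b')) *\<^sub>R b')" for x
  have "bounded_linear F" unfolding F_def by (auto intro!: bounded_linear_intros)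
  then obtain A where AF: "blinfun_apply A = F" using bounded_linear_Blinfun_apply by blast
  have coeff: "(\<Sum>b\<in>B. (x \<bullet> b) * g b (\<psi> b')) = g x (\<psi> b')" if "x \<in> W" "b' \<in> B" for x b'
    using symmetric_bilinear_on_expand_left[OF W gb B that(1) \<psi>W[OF that(2)]] by simp
  show ?thesis
  proof
    show "range (blinfun_apply A) \<subseteq> W"
      unfolding AF F_def using BD(2) by (auto intro!: subspace_sum[OF W] subspace_scale[OF W])
    show "\<forall>x. (\<forall>w\<in>W. x \<bullet> w = 0) \<longrightarrow> A x = 0"
    proof (intro allI impI)
      fix x assume "\<forall>w\<in>W. x \<bullet> w = 0"
      then have "x \<bullet> b = 0" if "b \<in> B" for b using that BD(2) by auto
      then show "A x = 0" unfolding AF F_def by (simp add: sum.neutral)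
    qed
    show "gram A = g"
    proof (intro ext)
      fix x y
      show "gram A x y = g x y"
      proof (cases "x \<in> W \<and> y \<in> W")
        case True
        then have "gram A x y = (\<Sum>b'\<in>B. g x (\<psi> b') * g y (\<psi> b'))"
          using B coeff unfolding orthonormal_basis_on_def
          by (simp add: gram_eq AF F_def inner_sum_orthonormal[of W])
        also have "\<dots> = (\<Sum>e\<in>B0. g x e * g y e)" using sum.reindex_bij_betw[OF \<psi>] by simp
        also have "\<dots> = g x y" using orthonormal_basis_on_parseval[OF W gb B0] True by simp
        finally show ?thesis .
      qed (use g_outside in \<open>auto simp: gram_def\<close>)
    qed
  qed
qed

lemma metrics_eq_gram_image: "metrics = gram ` factors"
proof
  show "gram ` factors \<subseteq> metrics" unfolding factors_def by auto
  show "metrics \<subseteq> gram ` factors"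
  proof
    fix g assume g: "g \<in> metrics"
    then have "inner_product_on W g" "\<forall>x y. x \<notin> W \<or> y \<notin> W \<longrightarrow> g x y = 0"
      using inv_inner_products_inner_product_on unfolding metrics_def inv_inner_products_def by auto
    then obtain A where "range (blinfun_apply A) \<subseteq> W" "\<forall>x. (\<forall>w\<in>W. x \<bullet> w = 0) \<longrightarrow> A x = 0"
      "gram A = g"
      by (rule gram_factor_exists)
    with g show "g \<in> gram ` factors" unfolding factors_def by (auto intro: image_eqI[of _ _ A])
  qed
qed

text \<open>Uniform coercivity of T makes inversion on W continuous along dominating families.\<close>

lemma inv_into_tendsto:
  assumes An: "\<And>n. dominates_T (An n)" and lim: "An \<longlonglongrightarrow> A" and A: "dominates_T A"
    and b: "b \<in> W"
  shows "(\<lambda>n. inv_into W (An n) b) \<longlonglongrightarrow> inv_into W A b"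
proof -
  obtain m where m: "m > 0" "\<And>y. y \<in> W \<Longrightarrow> m * (norm y)\<^sup>2 \<le> T y y"
    using inner_product_on_coercive[OF W T] by blast
  let ?u = "inv_into W A b" and ?un = "\<lambda>n. inv_into W (An n) b"
  have u: "?u \<in> W" "A ?u = b" and un: "?un n \<in> W" "An n (?un n) = b" for n
    using dominates_T_inv_into[OF A b] dominates_T_inv_into[OF An b] by auto
  have bound: "norm (?un n - ?u) \<le> norm (An n ?u - A ?u) / sqrt m" for n
  proof -
    let ?v = "?un n - ?u"
    have v: "?v \<in> W" using subspace_diff[OF W un(1) u(1)] .
    have "An n ?v = A ?u - An n ?u" using un u by (simp add: blinfun.diff_right)
    then have "m * (norm ?v)\<^sup>2 \<le> (norm (An n ?u - A ?u))\<^sup>2"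
      using m(2)[OF v] An[of n] v unfolding dominates_T_def
      by (smt (verit) norm_minus_commute power2_norm_eq_inner)
    then have "(sqrt m * norm ?v)\<^sup>2 \<le> (norm (An n ?u - A ?u))\<^sup>2"
      using m(1) by (simp add: power_mult_distrib)
    then have "sqrt m * norm ?v \<le> norm (An n ?u - A ?u)" by (rule power2_le_imp_le) simp
    then show ?thesis using m(1) by (simp add: field_simps)
  qed
  have "(\<lambda>n. norm (An n ?u - A ?u) / sqrt m) \<longlonglongrightarrow> 0"
    by (intro tendsto_divide_zero tendsto_norm_zero LIM_zero blinfun.tendsto[OF lim tendsto_const])
  then have "(\<lambda>n. ?un n - ?u) \<longlonglongrightarrow> 0"
    by (rule Lim_null_comparison[rotated]) (use bound in auto)
  then show ?thesis by (rule LIM_zero_cancel)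
qed

lemma trace_wrt_gram_tendsto:
  assumes An: "\<And>n. dominates_T (An n)" and lim: "An \<longlonglongrightarrow> A" and A: "dominates_T A"
  shows "(\<lambda>n. trace_wrt W (gram (An n)) T) \<longlonglongrightarrow> trace_wrt W (gram A) T"
proof -
  note BD = orthonormal_basis_onD[OF B]
  have "(\<lambda>n. \<Sum>b\<in>B. T (inv_into W (An n) b) (inv_into W (An n) b))
          \<longlonglongrightarrow> (\<Sum>b\<in>B. T (inv_into W A b) (inv_into W A b))"
    using BD(2) dominates_T_inv_into[OF An] dominates_T_inv_into[OF A]
    by (intro tendsto_sum symmetric_bilinear_on_tendsto[OF W inner_product_onD[OF T]]
        inv_into_tendsto[OF An lim A]) auto
  then show ?thesis using trace_wrt_gram An A by simp
qed

lemma gram_in_inv_inner_products: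
  assumes A: "dominates_T A"
    and invariant: "\<forall>X\<in>h. \<forall>x\<in>W. \<forall>y\<in>W. gram A (br X x) y + gram A x (br X y) = 0"
  shows "gram A \<in> inv_inner_products br h W"
proof -
  have "gram A x x > 0" if "x \<in> W" "x \<noteq> 0" for x
    using inner_product_on_pos[OF T that] A that unfolding dominates_T_def by (force simp: gram_eq)
  then show ?thesis
    using symmetric_bilinear_on_gram invariant
    unfolding inv_inner_products_def symmetric_bilinear_on_def by (auto simp: gram_def)
qed

lemma closed_factors: "closed factors"
  unfolding closed_sequential_limits
proof (intro allI impI, elim conjE)
  fix An A assume An: "\<forall>n. An n \<in> factors" and lim: "An \<longlonglongrightarrow> A"
  have app: "(\<lambda>n. An n x) \<longlonglongrightarrow> A x" for x using blinfun.tendsto[OF lim tendsto_const] .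
  have gram_lim: "(\<lambda>n. gram (An n) x y) \<longlonglongrightarrow> gram A x y" for x y
    unfolding gram_def by (cases "x \<in> W \<and> y \<in> W") (auto intro!: tendsto_inner app)
  have An_dom: "dominates_T (An n)" for n using An factors_dominates_T by blast
  have range: "range (blinfun_apply A) \<subseteq> W"
    using An closed_sequentially[OF closed_subspace[OF W] _ app] unfolding factors_def by blast
  have vanish: "A x = 0" if "\<forall>w\<in>W. x \<bullet> w = 0" for x
    using An that LIMSEQ_unique[OF app[of x]] unfolding factors_def by simp
  have dom: "dominates_T A"
    unfolding dominates_T_def
  proof (intro conjI range ballI)
    fix y assume "y \<in> W"
    then have "T y y \<le> An n y \<bullet> An n y" for n using An_dom unfolding dominates_T_def by blast
    then show "T y y \<le> A y \<bullet> A y" by (intro LIMSEQ_le_const[OF tendsto_inner[OF app app]]) simp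
  qed
  have "\<forall>y\<in>W. A y \<bullet> A y \<le> \<tau> * (norm y)\<^sup>2"
  proof
    fix y assume "y \<in> W"
    have "lambda_plus W (gram (An n)) \<le> \<tau>" for n using An unfolding factors_def metrics_def by blast
    then have "An n y \<bullet> An n y \<le> \<tau> * (norm y)\<^sup>2" for n
      using \<open>y \<in> W\<close> lambda_plus_gram_le_iff[THEN iffD1] by blast
    then show "A y \<bullet> A y \<le> \<tau> * (norm y)\<^sup>2" by (intro LIMSEQ_le_const2[OF tendsto_inner[OF app app]]) simp
  qed
  then have "lambda_plus W (gram A) \<le> \<tau>" by (rule lambda_plus_gram_le_iff[THEN iffD2])
  moreover have "gram A \<in> inv_inner_products br h W"
  proof (rule gram_in_inv_inner_products[OF dom], intro ballI)
    fix X x y assume "X \<in> h" "x \<in> W" "y \<in> W"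
    then have "gram (An n) (br X x) y + gram (An n) x (br X y) = 0" for n
      using An unfolding factors_def metrics_def inv_inner_products_def by blast
    then show "gram A (br X x) y + gram A x (br X y) = 0"
      using LIMSEQ_unique[OF tendsto_add[OF gram_lim gram_lim]] by simp
  qed
  moreover have "trace_wrt W (gram A) T = 1"
    using LIMSEQ_unique[OF trace_wrt_gram_tendsto[OF An_dom lim dom]] An
    unfolding factors_def metrics_def by simp
  ultimately show "A \<in> factors" using range vanish unfolding factors_def metrics_def by blast
qed

lemma compact_metrics: "compact metrics"
proof -
  have "compact factors" using bounded_factors closed_factors by (simp add: compact_eq_bounded_closed)
  then show ?thesis
    unfolding metrics_eq_gram_image
    by (rule compact_continuous_image[OF continuous_on_subset[OF continuous_on_gram subset_UNIV]])
qed

end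

theorem mainTheorem14:
  fixes br :: "'a::euclidean_space \<Rightarrow> 'a \<Rightarrow> 'a"
    and h k :: "'a set"
    and T :: "'a \<Rightarrow> 'a \<Rightarrow> real"
    and \<tau> :: real
  assumes "compact_lie_bracket br"
    and "lie_subalgebra br h"
    and "DIM('a) \<ge> dim h + 3"
    and "hypothesis_H br h"
    and "T \<in> inv_inner_products br h (ocompl UNIV h)"
    and "lie_subalgebra br k" and "h \<subset> k"
    and "\<tau> > 0"
  shows "compact {g \<in> inv_inner_products br h (ocompl k h).
                    trace_wrt (ocompl k h) g T = 1 \<and> lambda_plus (ocompl k h) g \<le> \<tau>}"
proof -
  have k: "subspace k" and h: "subspace h" using assms(2,6) unfolding lie_subalgebra_def by auto
  have W: "subspace (ocompl k h)" using subspace_ocompl[OF k] .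
  have "ocompl k h \<subseteq> ocompl UNIV h" unfolding ocompl_def by auto
  then have "inner_product_on (ocompl k h) T"
    by (rule inner_product_on_subset[OF inv_inner_products_inner_product_on[OF assms(5)]])
  moreover obtain B where "orthonormal_basis_on (ocompl k h) (\<bullet>) B"
    using orthonormal_basis_on_inner_exists[OF W] ..
  ultimately interpret bounded_metrics br h "ocompl k h" T \<tau> B
    using W ocompl_nontrivial[OF k h assms(7)] assms(8) by unfold_locales
  show ?thesis using compact_metrics unfolding metrics_def .
qed

end
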